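(* Let $\{(X_i,Y_i)\}_{i\ge 1}$ be a stationary ergodic sequence of random vectors with values in $\mathbb{R}^d\times\mathbb{R}$ such that $E|Y_1|<\infty$, and let $(X,Y)$ denote a random vector with the common distribution of the $(X_i,Y_i)$; let $\mu$ be the distribution of $X$. Let $L>0$ be arbitrary and let $N_n$ be a non-decreasing sequence of positive integers with $N_n\to\infty$. With $S$, $m_L$ and $\hat m_{n,L}$ as defined in the context, the following hold. (a) Almost surely, for all $x\in S$ simultaneously, $\hat m_{n,L}(x)\to m_L(x)$ as $n\to\infty$. (b) If $S$ is a bounded subset of $\mathbb{R}^d$, then almost surely $\sup_{x\in S}|\hat m_{n,L}(x)-m_L(x)|\to 0$. (c) If either (i) $|Y|\le D$ almost surely for some finite constant $D$ (which need not be known), or (ii) $\mu$ has bounded support, then almost surely $\int (\hat m_{n,L}(x)-m_L(x))^2\,\mu(dx)\to 0$.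
   Context: For $k\ge 1$, $\mathcal{P}_k=\{A_{k,i}: i=1,2,\dots\}$ is a partition of $\mathbb{R}^d$ into cubes of volume $(2^{-k-2})^d$ (side length $2^{-k-2}$), and the partitions are nested ($\mathcal{P}_{k+1}$ refines $\mathcal{P}_k$). For $x\in\mathbb{R}^d$, $A_k(x)$ denotes the cell of $\mathcal{P}_k$ containing $x$. The support is $S=\{x\in\mathbb{R}^d: \mu(A_k(x))>0 \text{ for all } k\ge 1\}$. For $x\in S$ put $M_k(x)=E(Y\mid X\in A_k(x))$, and for $k\ge 2$, $\Delta_{k,L}(x)=\mathrm{sign}(M_k(x)-M_{k-1}(x))\min(|M_k(x)-M_{k-1}(x)|,L2^{-k})$, and $m_L(x)=M_1(x)+\sum_{k=2}^\infty \Delta_{k,L}(x)$ (the series converges since $|\Delta_{k,L}|\le L2^{-k}$). Estimator: $\hat M_{k,n}(x)=\frac{\sum_{j=1}^n Y_j 1_{\{X_j\in A_k(x)\}}}{\sum_{j=1}^n 1_{\{X_j\in A_k(x)\}}}$, with $\hat M_{k,n}(x)=0$ if the denominator is $0$; for $k\ge 2$, $\hat\Delta_{k,n,L}(x)=\mathrm{sign}(\hat M_{k,n}(x)-\hat M_{k-1,n}(x))\min(|\hat M_{k,n}(x)-\hat M_{k-1,n}(x)|,L2^{-k})$; and $\hat m_{n,L}(x)=\hat M_{1,n}(x)+\sum_{k=2}^{N_n}\hat\Delta_{k,n,L}(x)$. *)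

theory Defs
  imports "HOL-Probability.Probability"
begin

text \<open>A set C is a cube of side h: it lies between the open and the closed
  axis-parallel box with lower corner a and side length h (any boundary convention).\<close>
definition is_cube :: "'x::euclidean_space set \<Rightarrow> real \<Rightarrow> bool" where
  "is_cube C h \<longleftrightarrow> (\<exists>a. box a (a + h *\<^sub>R One) \<subseteq> C \<and> C \<subseteq> cbox a (a + h *\<^sub>R One))"

definition nested_cube_partitions :: "(nat \<Rightarrow> 'x::euclidean_space \<Rightarrow> 'x set) \<Rightarrow> bool" where
  "nested_cube_partitions A \<longleftrightarrow>
     (\<forall>k\<ge>1. \<forall>x. x \<in> A k x \<and> (\<forall>y\<in>A k x. A k y = A k x) \<and> A k x \<in> sets borel
        \<and> is_cube (A k x) (1 / 2 ^ (k + 2)) \<and> A (Suc k) x \<subseteq> A k x)"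

definition process_law :: "'o measure \<Rightarrow> (nat \<Rightarrow> 'o \<Rightarrow> 'b::topological_space) \<Rightarrow> (nat \<Rightarrow> 'b) measure" where
  "process_law M Z = distr M (Pi\<^sub>M UNIV (\<lambda>_. borel)) (\<lambda>\<omega> i. Z (Suc i) \<omega>)"

definition seq_shift :: "(nat \<Rightarrow> 'b) \<Rightarrow> (nat \<Rightarrow> 'b)" where
  "seq_shift s = (\<lambda>i. s (Suc i))"

definition stationary_ergodic :: "'o measure \<Rightarrow> (nat \<Rightarrow> 'o \<Rightarrow> 'b::topological_space) \<Rightarrow> bool" where
  "stationary_ergodic M Z \<longleftrightarrow>
     (\<forall>i\<ge>1. Z i \<in> borel_measurable M) \<and>
     distr (process_law M Z) (Pi\<^sub>M UNIV (\<lambda>_. borel)) seq_shift = process_law M Z \<and>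
     (\<forall>B \<in> sets (Pi\<^sub>M UNIV (\<lambda>_. borel)).
        seq_shift -` B \<inter> space (Pi\<^sub>M UNIV (\<lambda>_. borel)) = B \<longrightarrow>
        measure (process_law M Z) B = 0 \<or> measure (process_law M Z) B = 1)"

definition clip :: "real \<Rightarrow> real \<Rightarrow> real" where
  "clip c t = sgn t * min \<bar>t\<bar> c"

definition cell_support :: "'x measure \<Rightarrow> (nat \<Rightarrow> 'x \<Rightarrow> 'x set) \<Rightarrow> 'x set" where
  "cell_support \<mu> A = {x. \<forall>k\<ge>1. measure \<mu> (A k x) > 0}"

definition cell_mean :: "'o measure \<Rightarrow> ('o \<Rightarrow> 'x) \<Rightarrow> ('o \<Rightarrow> real) \<Rightarrow> (nat \<Rightarrow> 'x \<Rightarrow> 'x set)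
    \<Rightarrow> nat \<Rightarrow> 'x \<Rightarrow> real" where
  "cell_mean M X Y A k x =
     (\<integral>\<omega>. indicator (A k x) (X \<omega>) * Y \<omega> \<partial>M) / measure M {\<omega>\<in>space M. X \<omega> \<in> A k x}"

definition m_L :: "'o measure \<Rightarrow> ('o \<Rightarrow> 'x) \<Rightarrow> ('o \<Rightarrow> real) \<Rightarrow> (nat \<Rightarrow> 'x \<Rightarrow> 'x set)
    \<Rightarrow> real \<Rightarrow> 'x \<Rightarrow> real" where
  "m_L M X Y A L x = cell_mean M X Y A 1 x +
     (\<Sum>j. clip (L / 2 ^ (j + 2)) (cell_mean M X Y A (j + 2) x - cell_mean M X Y A (j + 1) x))"

definition emp_cell_mean :: "(nat \<Rightarrow> 'o \<Rightarrow> 'x) \<Rightarrow> (nat \<Rightarrow> 'o \<Rightarrow> real) \<Rightarrow> (nat \<Rightarrow> 'x \<Rightarrow> 'x set)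
    \<Rightarrow> nat \<Rightarrow> nat \<Rightarrow> 'x \<Rightarrow> 'o \<Rightarrow> real" where
  "emp_cell_mean X Y A k n x \<omega> =
     (let den = (\<Sum>j\<in>{1..n}. indicator (A k x) (X j \<omega>) :: real)
      in if den = 0 then 0
         else (\<Sum>j\<in>{1..n}. Y j \<omega> * indicator (A k x) (X j \<omega>)) / den)"

definition m_hat :: "(nat \<Rightarrow> 'o \<Rightarrow> 'x) \<Rightarrow> (nat \<Rightarrow> 'o \<Rightarrow> real) \<Rightarrow> (nat \<Rightarrow> 'x \<Rightarrow> 'x set)
    \<Rightarrow> (nat \<Rightarrow> nat) \<Rightarrow> real \<Rightarrow> nat \<Rightarrow> 'x \<Rightarrow> 'o \<Rightarrow> real" where
  "m_hat X Y A N L n x \<omega> = emp_cell_mean X Y A 1 n x \<omega> +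
     (\<Sum>k\<in>{2..N n}. clip (L / 2 ^ k)
        (emp_cell_mean X Y A k n x \<omega> - emp_cell_mean X Y A (k - 1) n x \<omega>))"

end

theory Submission
  imports Defs
begin

text \<open>Each level of the estimator is a ratio of two ergodic averages over a fixed cell, so by
  Birkhoff's ergodic theorem (proved below via Garsia's maximal inequality, applied to the shift on
  path space) every empirical cell mean converges almost surely to the corresponding conditional
  mean. Every cell contains a point of a fixed countable dense set, so one null set serves for all
  cells. Truncating the \<open>k\<close>-th increment at \<open>L 2\<^sup>-\<^sup>k\<close> dominates the series by a summable
  sequence, so convergence of each level carries over to the estimator: pointwise on \<open>S\<close>, and
  uniformly on bounded sets, which meet only finitely many cells of each level. Convergence in
  \<open>L\<^sup>2(\<mu>)\<close> then follows from uniform convergence on bounded sets, since the estimator is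
  uniformly bounded when \<open>Y\<close> is, and \<open>S\<close> is bounded when \<open>\<mu>\<close> has bounded support.\<close>

section \<open>Birkhoff's ergodic theorem\<close>

definition birkhoff_sum :: "('a \<Rightarrow> 'a) \<Rightarrow> ('a \<Rightarrow> real) \<Rightarrow> nat \<Rightarrow> 'a \<Rightarrow> real" where
  "birkhoff_sum T f n s = (\<Sum>j<n. f ((T ^^ j) s))"

lemma birkhoff_sum_0 [simp]: "birkhoff_sum T f 0 s = 0"
  by (simp add: birkhoff_sum_def)

lemma birkhoff_sum_Suc: "birkhoff_sum T f (Suc n) s = f s + birkhoff_sum T f n (T s)"
  unfolding birkhoff_sum_def
  by (simp add: sum.lessThan_Suc_shift funpow_Suc_right del: funpow.simps sum.lessThan_Suc)

lemma birkhoff_sum_uminus: "birkhoff_sum T (\<lambda>s. - f s) n s = - birkhoff_sum T f n s"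
  by (simp add: birkhoff_sum_def sum_negf)

lemma frequently_Suc_iff: "(\<exists>\<^sub>F n in sequentially. P (Suc n)) \<longleftrightarrow> (\<exists>\<^sub>F n in sequentially. P n)"
  unfolding frequently_def using eventually_sequentially_Suc[of "\<lambda>n. \<not> P n"] by simp

text \<open>Applied to \<open>a n = birkhoff_sum T f n s\<close> and \<open>b n = birkhoff_sum T f n (T s)\<close>, this shows
  that the upper growth rate of Birkhoff sums is \<open>T\<close>-invariant.\<close>
lemma frequently_above_shift:
  fixes a b :: "nat \<Rightarrow> real" and c q q' :: real
  assumes ab: "\<And>n. a (Suc n) = c + b n" and "q' < q"
  shows frequently_above_shift_left:
      "(\<exists>\<^sub>F n in sequentially. n * q < b n) \<Longrightarrow> (\<exists>\<^sub>F n in sequentially. n * q' < a n)"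
    and frequently_above_shift_right:
      "(\<exists>\<^sub>F n in sequentially. n * q < a n) \<Longrightarrow> (\<exists>\<^sub>F n in sequentially. n * q' < b n)"
proof -
  obtain N :: nat where N: "(\<bar>c\<bar> + \<bar>q\<bar> + \<bar>q'\<bar>) / (q - q') \<le> N"
    using real_arch_simple by blast
  have large: "\<forall>\<^sub>F n in sequentially. q' - c \<le> n * (q - q') \<and> c - q \<le> n * (q - q')"
  proof (rule eventually_sequentiallyI)
    fix n assume "N \<le> n"
    then have "(\<bar>c\<bar> + \<bar>q\<bar> + \<bar>q'\<bar>) / (q - q') \<le> n" using N by linarith
    then have "\<bar>c\<bar> + \<bar>q\<bar> + \<bar>q'\<bar> \<le> n * (q - q')"
      using \<open>q' < q\<close> by (simp add: divide_le_eq)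
    then show "q' - c \<le> n * (q - q') \<and> c - q \<le> n * (q - q')" by linarith
  qed
  show "\<exists>\<^sub>F n in sequentially. n * q' < a n" if "\<exists>\<^sub>F n in sequentially. n * q < b n"
  proof -
    have "\<exists>\<^sub>F n in sequentially. Suc n * q' < a (Suc n)"
      using that by (rule frequently_rev_mp) (use large in \<open>eventually_elim, simp add: ab algebra_simps\<close>)
    then show ?thesis using frequently_Suc_iff[of "\<lambda>n. n * q' < a n"] by simp
  qed
  show "\<exists>\<^sub>F n in sequentially. n * q' < b n" if "\<exists>\<^sub>F n in sequentially. n * q < a n"
  proof -
    have "\<exists>\<^sub>F n in sequentially. Suc n * q < a (Suc n)"
      using that frequently_Suc_iff[of "\<lambda>n. n * q < a n"] by simp
    then show ?thesis
      by (rule frequently_rev_mp) (use large in \<open>eventually_elim, simp add: ab algebra_simps\<close>)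
  qed
qed

lemma frequently_above_birkhoff_sum_invariant:
  fixes \<beta> :: real
  shows "(\<exists>q::rat. \<beta> < of_rat q \<and> (\<exists>\<^sub>F n in sequentially. n * of_rat q < birkhoff_sum T f n (T s)))
    \<longleftrightarrow> (\<exists>q::rat. \<beta> < of_rat q \<and> (\<exists>\<^sub>F n in sequentially. n * of_rat q < birkhoff_sum T f n s))"
    (is "(\<exists>q. ?above (T s) q) \<longleftrightarrow> (\<exists>q. ?above s q)")
proof -
  have shift: "birkhoff_sum T f (Suc n) s = f s + birkhoff_sum T f n (T s)" for n
    by (rule birkhoff_sum_Suc)
  note left = frequently_above_shift_left[where a="\<lambda>n. birkhoff_sum T f n s", OF shift]
    and right = frequently_above_shift_right[where a="\<lambda>n. birkhoff_sum T f n s", OF shift]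
  show ?thesis
  proof
    assume "\<exists>q. ?above (T s) q"
    then obtain q where q: "?above (T s) q" ..
    then obtain q' :: rat where "\<beta> < of_rat q'" "of_rat q' < (of_rat q :: real)"
      using of_rat_dense[of \<beta> "of_rat q"] by blast
    with q have "?above s q'" using left by blast
    then show "\<exists>q. ?above s q" ..
  next
    assume "\<exists>q. ?above s q"
    then obtain q where q: "?above s q" ..
    then obtain q' :: rat where "\<beta> < of_rat q'" "of_rat q' < (of_rat q :: real)"
      using of_rat_dense[of \<beta> "of_rat q"] by blast
    with q have "?above (T s) q'" using right by blast
    then show "\<exists>q. ?above (T s) q" ..
  qed
qed

locale measure_preserving_transformation = prob_space M for M :: "'a measure" +
  fixes T :: "'a \<Rightarrow> 'a"
  assumes measurable_T [measurable]: "T \<in> M \<rightarrow>\<^sub>M M"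
    and distr_T: "distr M M T = M"
begin

lemma distr_funpow: "distr M M (T ^^ j) = M"
proof (induction j)
  case (Suc j)
  have "distr M M (T ^^ Suc j) = distr (distr M M (T ^^ j)) M T"
    by (simp add: distr_distr measurable_compose_n)
  then show ?case using Suc distr_T by (simp del: funpow.simps)
qed (simp add: distr_id2)

lemma
  fixes f :: "'a \<Rightarrow> 'b::{banach, second_countable_topology}"
  assumes f: "integrable M f"
  shows integrable_funpow: "integrable M (\<lambda>s. f ((T ^^ j) s))"
    and integral_funpow: "(\<integral>s. f ((T ^^ j) s) \<partial>M) = (\<integral>s. f s \<partial>M)"
proof -
  have [measurable]: "f \<in> borel_measurable M" using f by simp
  show "integrable M (\<lambda>s. f ((T ^^ j) s))"
    using f integrable_distr_eq[of "T ^^ j" M M f] by (simp add: distr_funpow)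
  show "(\<integral>s. f ((T ^^ j) s) \<partial>M) = (\<integral>s. f s \<partial>M)"
    using integral_distr[of "T ^^ j" M M f] by (simp add: distr_funpow)
qed

lemma birkhoff_sum_measurable [measurable]:
  "f \<in> borel_measurable M \<Longrightarrow> birkhoff_sum T f n \<in> borel_measurable M"
  unfolding birkhoff_sum_def
  by (intro borel_measurable_sum measurable_compose[OF measurable_compose_n[OF measurable_T]])

lemma integrable_birkhoff_sum: "integrable M f \<Longrightarrow> integrable M (birkhoff_sum T f n)"
  unfolding birkhoff_sum_def by (intro Bochner_Integration.integrable_sum integrable_funpow)

definition birkhoff_max :: "('a \<Rightarrow> real) \<Rightarrow> nat \<Rightarrow> 'a \<Rightarrow> real" where
  "birkhoff_max f N s = Max ((\<lambda>k. birkhoff_sum T f k s) ` {..N})"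

lemma birkhoff_sum_le_max: "k \<le> N \<Longrightarrow> birkhoff_sum T f k s \<le> birkhoff_max f N s"
  unfolding birkhoff_max_def by (intro Max_ge) auto

lemma birkhoff_max_nonneg: "0 \<le> birkhoff_max f N s"
  using birkhoff_sum_le_max[of 0 N f s] by simp

lemma birkhoff_max_pos_iff: "0 < birkhoff_max f N s \<longleftrightarrow> (\<exists>k\<le>N. 0 < birkhoff_sum T f k s)"
  unfolding birkhoff_max_def by (subst Max_gr_iff) auto

lemma birkhoff_max_le_shift:
  assumes "0 < birkhoff_max f N s"
  shows "birkhoff_max f N s \<le> f s + birkhoff_max f N (T s)"
proof -
  have "birkhoff_max f N s \<in> (\<lambda>k. birkhoff_sum T f k s) ` {..N}"
    unfolding birkhoff_max_def by (intro Max_in) auto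
  then obtain k where k: "k \<le> N" "birkhoff_max f N s = birkhoff_sum T f k s" by auto
  then obtain k' where "k = Suc k'"
    using assms by (cases k) auto
  then show ?thesis
    using k birkhoff_sum_le_max[of k' N f "T s"] by (simp add: birkhoff_sum_Suc)
qed

lemma integrable_birkhoff_max:
  assumes f: "integrable M f"
  shows "integrable M (birkhoff_max f N)"
proof (induction N)
  case (Suc N)
  then show ?case
    unfolding birkhoff_max_def atMost_Suc image_insert
    by (subst Max_insert) (auto intro: integrable_max integrable_birkhoff_sum[OF f])
qed (simp add: birkhoff_max_def integrable_birkhoff_sum[OF f])

lemma maximal_ergodic_bounded:
  assumes f: "integrable M f"
  shows "0 \<le> (\<integral>s. f s * indicator {s \<in> space M. \<exists>k\<le>N. 0 < birkhoff_sum T f k s} s \<partial>M)"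
proof -
  define m where "m = birkhoff_max f N"
  define E where "E = {s \<in> space M. \<exists>k\<le>N. 0 < birkhoff_sum T f k s}"
  have m: "integrable M m"
    unfolding m_def by (rule integrable_birkhoff_max[OF f])
  have "m s - m (T s) \<le> f s * indicator E s" if "s \<in> space M" for s
    using that birkhoff_max_le_shift[of f N s] birkhoff_max_nonneg[of f N s] birkhoff_max_nonneg[of f N "T s"]
      birkhoff_max_pos_iff[of f N s]
    unfolding m_def E_def by (cases "0 < birkhoff_max f N s") auto
  then have "(\<integral>s. m s - m (T s) \<partial>M) \<le> (\<integral>s. f s * indicator E s \<partial>M)"
    using m integrable_funpow[OF m, of 1] f
    by (intro integral_mono integrable_real_mult_indicator) (auto simp: E_def)
  moreover have "(\<integral>s. m s - m (T s) \<partial>M) = 0"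
    using m integral_funpow[OF m, of 1] integrable_funpow[OF m, of 1] by simp
  ultimately show ?thesis unfolding E_def by simp
qed

lemma maximal_ergodic:
  assumes f: "integrable M f"
  shows "0 \<le> (\<integral>s. f s * indicator {s \<in> space M. \<exists>n. 0 < birkhoff_sum T f n s} s \<partial>M)"
proof -
  define E where "E N = {s \<in> space M. \<exists>k\<le>N. 0 < birkhoff_sum T f k s}" for N
  define E' where "E' = {s \<in> space M. \<exists>n. 0 < birkhoff_sum T f n s}"
  have "AE s in M. (\<lambda>N. f s * indicator (E N) s) \<longlonglongrightarrow> f s * indicator E' s"
  proof (intro AE_I2)
    fix s
    have "\<forall>\<^sub>F N in sequentially. indicator (E N) s = (indicator E' s :: real)"
    proof (cases "s \<in> E'")
      case True
      then obtain n where "0 < birkhoff_sum T f n s" unfolding E'_def by auto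
      then show ?thesis using True
        by (intro eventually_sequentiallyI[of n]) (auto simp: E_def E'_def indicator_def)
    qed (auto simp: E_def E'_def indicator_def)
    then show "(\<lambda>N. f s * indicator (E N) s) \<longlonglongrightarrow> f s * indicator E' s"
      by (simp add: tendsto_eventually)
  qed
  then have "(\<lambda>N. \<integral>s. f s * indicator (E N) s \<partial>M) \<longlonglongrightarrow> (\<integral>s. f s * indicator E' s \<partial>M)"
    using f by (intro integral_dominated_convergence[where w="\<lambda>s. \<bar>f s\<bar>"])
      (auto simp: E_def E'_def indicator_def)
  then show ?thesis unfolding E'_def
    by (rule LIMSEQ_le_const) (use maximal_ergodic_bounded[OF f] in \<open>auto simp: E_def\<close>)
qed

lemma funpow_mem_invariant:
  assumes s: "s \<in> space M" and invariant: "\<And>s. s \<in> space M \<Longrightarrow> T s \<in> B \<longleftrightarrow> s \<in> B"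
  shows "(T ^^ j) s \<in> B \<longleftrightarrow> s \<in> B"
proof (induction j)
  case (Suc j)
  have "(T ^^ j) s \<in> space M"
    using measurable_space[OF measurable_compose_n[OF measurable_T] s] .
  then show ?case using invariant Suc by simp
qed simp

text \<open>The maximal ergodic lemma applied to \<open>(f - \<alpha>)\<close> restricted to an invariant set \<open>B\<close>.\<close>
lemma prob_mult_le_integral_invariant:
  assumes f: "integrable M f" and B: "B \<in> sets M"
    and invariant: "\<And>s. s \<in> space M \<Longrightarrow> T s \<in> B \<longleftrightarrow> s \<in> B"
    and above: "\<And>s. s \<in> B \<Longrightarrow> \<exists>n. n * \<alpha> < birkhoff_sum T f n s"
  shows "\<alpha> * prob B \<le> (\<integral>s. f s * indicator B s \<partial>M)"
proof -
  define g where "g s = (f s - \<alpha>) * indicator B s" for s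
  have g: "integrable M g"
    unfolding g_def using f B by (intro integrable_real_mult_indicator) auto
  have sum_g: "birkhoff_sum T g n s = indicator B s * (birkhoff_sum T f n s - n * \<alpha>)"
    if "s \<in> space M" for n s
    using funpow_mem_invariant[OF that invariant]
    by (simp add: birkhoff_sum_def g_def indicator_def sum_subtractf)
  have "{s \<in> space M. \<exists>n. 0 < birkhoff_sum T g n s} = B"
  proof safe
    fix s n assume "s \<in> space M" "0 < birkhoff_sum T g n s"
    then show "s \<in> B" using sum_g by (cases "s \<in> B") auto
  next
    fix s assume "s \<in> B"
    moreover from this obtain n where "n * \<alpha> < birkhoff_sum T f n s" using above by blast
    moreover have "s \<in> space M" using B \<open>s \<in> B\<close> sets.sets_into_space by blast
    ultimately show "\<exists>n. 0 < birkhoff_sum T g n s" using sum_g by auto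
  qed (use B sets.sets_into_space in blast)
  then have "0 \<le> (\<integral>s. g s * indicator B s \<partial>M)"
    using maximal_ergodic[OF g] by simp
  also have "\<dots> = (\<integral>s. f s * indicator B s - \<alpha> * indicator B s \<partial>M)"
    by (intro Bochner_Integration.integral_cong) (auto simp: g_def indicator_def)
  also have "\<dots> = (\<integral>s. f s * indicator B s \<partial>M) - \<alpha> * prob B"
    using f B integrable_real_mult_indicator[OF B integrable_const[of \<alpha>]]
    by (subst Bochner_Integration.integral_diff) (auto intro: integrable_real_mult_indicator)
  finally show ?thesis by simp
qed

end

locale ergodic_transformation = measure_preserving_transformation +
  assumes ergodic: "\<And>B. B \<in> sets M \<Longrightarrow> T -` B \<inter> space M = B \<Longrightarrow> prob B = 0 \<or> prob B = 1"
begin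

lemma AE_eventually_birkhoff_sum_le:
  assumes f: "integrable M f" and "expectation f < \<beta>"
  shows "AE s in M. \<forall>q::rat. \<beta> < of_rat q \<longrightarrow>
    (\<forall>\<^sub>F n in sequentially. birkhoff_sum T f n s \<le> n * of_rat q)"
proof -
  have [measurable]: "f \<in> borel_measurable M" using f by simp
  define B where "B = {s \<in> space M. \<exists>q::rat. \<beta> < of_rat q \<and>
      (\<exists>\<^sub>F n in sequentially. n * of_rat q < birkhoff_sum T f n s)}"
  have B: "B \<in> sets M" unfolding B_def frequently_sequentially by measurable
  have invariant: "T s \<in> B \<longleftrightarrow> s \<in> B" if "s \<in> space M" for s
    using that measurable_space[OF measurable_T that] frequently_above_birkhoff_sum_invariant[of \<beta> T f s]
    unfolding B_def by simp
  have "prob B \<noteq> 1"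
  proof
    assume "prob B = 1"
    then have "(\<integral>s. f s * indicator B s \<partial>M) = expectation f"
      using B by (intro integral_cong_AE) (auto dest: AE_prob_1)
    moreover have "\<beta> * prob B \<le> (\<integral>s. f s * indicator B s \<partial>M)"
    proof (rule prob_mult_le_integral_invariant[OF f B invariant])
      fix s assume "s \<in> B"
      then obtain q :: rat and n where "\<beta> < of_rat q" "n * of_rat q < birkhoff_sum T f n s"
        unfolding B_def by (blast dest: frequently_ex)
      moreover have "n * \<beta> \<le> n * of_rat q" using \<open>\<beta> < of_rat q\<close> by (simp add: mult_left_mono)
      ultimately show "\<exists>n. n * \<beta> < birkhoff_sum T f n s" by (intro exI[of _ n]) linarith
    qed
    ultimately show False using \<open>prob B = 1\<close> \<open>expectation f < \<beta>\<close> by simp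
  qed
  then have "prob B = 0"
    using ergodic[OF B] B invariant sets.sets_into_space[OF B] by blast
  then have "AE s in M. s \<notin> B"
    using B by (intro AE_not_in) (simp add: null_sets_def emeasure_eq_measure)
  then show ?thesis
  proof (rule AE_mp, intro AE_I2 impI allI)
    fix s q assume "s \<in> space M" "s \<notin> B" "\<beta> < of_rat q"
    then have "\<not> (\<exists>\<^sub>F n in sequentially. n * of_rat q < birkhoff_sum T f n s)"
      unfolding B_def by blast
    then show "\<forall>\<^sub>F n in sequentially. birkhoff_sum T f n s \<le> n * of_rat q"
      by (simp add: not_frequently not_less)
  qed
qed

lemma AE_eventually_birkhoff_average_le:
  assumes f: "integrable M f" and "expectation f < \<alpha>"
  shows "AE s in M. \<forall>\<^sub>F n in sequentially. birkhoff_sum T f n s / n \<le> \<alpha>"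
proof -
  obtain q :: rat where q: "expectation f < of_rat q" "of_rat q < \<alpha>"
    using of_rat_dense[OF \<open>expectation f < \<alpha>\<close>] by blast
  obtain r :: rat where r: "expectation f < of_rat r" "of_rat r < (of_rat q :: real)"
    using of_rat_dense[OF q(1)] by blast
  from AE_eventually_birkhoff_sum_le[OF f r(1)] show ?thesis
  proof eventually_elim
    case (elim s)
    then have "\<forall>\<^sub>F n in sequentially. birkhoff_sum T f n s \<le> n * of_rat q \<and> 0 < n"
      using r(2) eventually_gt_at_top[of 0] by (auto intro: eventually_conj)
    then show ?case
    proof eventually_elim
      case (elim n)
      have "real n * of_rat q \<le> n * \<alpha>"
        using q(2) by (intro mult_left_mono) auto
      with elim have "birkhoff_sum T f n s \<le> n * \<alpha>" by linarith
      with elim show ?case by (simp add: divide_le_eq mult.commute)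
    qed
  qed
qed

theorem birkhoff_ergodic:
  assumes f: "integrable M f"
  shows "AE s in M. (\<lambda>n. birkhoff_sum T f n s / n) \<longlonglongrightarrow> expectation f"
proof -
  have "AE s in M. \<forall>r::rat. expectation f < of_rat r \<longrightarrow>
      (\<forall>\<^sub>F n in sequentially. birkhoff_sum T f n s / n \<le> of_rat r)"
    unfolding AE_all_countable using AE_eventually_birkhoff_average_le[OF f] by simp
  moreover have "AE s in M. \<forall>r::rat. - expectation f < of_rat r \<longrightarrow>
      (\<forall>\<^sub>F n in sequentially. - birkhoff_sum T f n s / n \<le> of_rat r)"
    unfolding AE_all_countable
    using AE_eventually_birkhoff_average_le[of "\<lambda>s. - f s"] f by (simp add: birkhoff_sum_uminus)
  ultimately show ?thesis
  proof (eventually_elim, intro order_tendstoI)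
    fix s a
    assume upper: "\<forall>r::rat. expectation f < of_rat r \<longrightarrow>
        (\<forall>\<^sub>F n in sequentially. birkhoff_sum T f n s / n \<le> of_rat r)"
      and lower: "\<forall>r::rat. - expectation f < of_rat r \<longrightarrow>
        (\<forall>\<^sub>F n in sequentially. - birkhoff_sum T f n s / n \<le> of_rat r)"
    show "\<forall>\<^sub>F n in sequentially. birkhoff_sum T f n s / n < a" if a: "expectation f < a"
    proof -
      obtain r :: rat where "expectation f < of_rat r" "of_rat r < a"
        using of_rat_dense[OF a] by blast
      then have "\<forall>\<^sub>F n in sequentially. birkhoff_sum T f n s / n \<le> of_rat r"
        using upper by blast
      then show ?thesis by eventually_elim (use \<open>of_rat r < a\<close> in linarith)
    qed
    show "\<forall>\<^sub>F n in sequentially. a < birkhoff_sum T f n s / n" if a: "a < expectation f"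
    proof -
      obtain r :: rat where "a < of_rat r" "of_rat r < expectation f"
        using of_rat_dense[OF a] by blast
      then have "- expectation f < of_rat (- r)" "of_rat (- r) < - a"
        by (simp_all add: of_rat_minus)
      then have "\<forall>\<^sub>F n in sequentially. - birkhoff_sum T f n s / n \<le> of_rat (- r)"
        using lower by blast
      then show ?thesis by eventually_elim (use \<open>of_rat (- r) < - a\<close> in simp)
    qed
  qed
qed

end

section \<open>Stationary ergodic sequences\<close>

lemma funpow_seq_shift: "(seq_shift ^^ j) s = (\<lambda>i. s (i + j))"
  by (induction j arbitrary: s) (auto simp: seq_shift_def funpow_Suc_right simp del: funpow.simps)

lemma measurable_seq_shift [measurable]:
  "seq_shift \<in> Pi\<^sub>M UNIV (\<lambda>_. M) \<rightarrow>\<^sub>M Pi\<^sub>M UNIV (\<lambda>_. M)"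
  unfolding seq_shift_def by (rule measurable_PiM_single') (auto simp: space_PiM)

lemma measurable_process:
  assumes "stationary_ergodic M Z"
  shows "(\<lambda>\<omega> i. Z (Suc i) \<omega>) \<in> M \<rightarrow>\<^sub>M Pi\<^sub>M UNIV (\<lambda>_. borel)"
  using assms unfolding stationary_ergodic_def
  by (intro measurable_PiM_single') (auto simp: measurable_space)

lemma ergodic_transformation_process_law:
  assumes M: "prob_space M" and Z: "stationary_ergodic M Z"
  shows "ergodic_transformation (process_law M Z) seq_shift"
proof -
  let ?\<Omega> = "Pi\<^sub>M UNIV (\<lambda>_. borel) :: (nat \<Rightarrow> 'b) measure"
  let ?P = "process_law M Z"
  have sets_P: "sets ?P = sets ?\<Omega>" and space_P: "space ?P = space ?\<Omega>"
    by (simp_all add: process_law_def)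
  have "prob_space ?P"
    unfolding process_law_def using M measurable_process[OF Z]
    by (rule prob_space.prob_space_distr)
  moreover have "seq_shift \<in> ?P \<rightarrow>\<^sub>M ?P"
    using measurable_seq_shift measurable_cong_sets[OF sets_P sets_P] by blast
  moreover have "distr ?P ?P seq_shift = distr ?P ?\<Omega> seq_shift"
    by (rule distr_cong) (simp_all add: sets_P)
  ultimately show ?thesis
    using Z unfolding stationary_ergodic_def
    by (simp add: ergodic_transformation_def ergodic_transformation_axioms_def sets_P space_P
        measure_preserving_transformation_def measure_preserving_transformation_axioms_def)
qed

lemma stationary_ergodic_AE_all:
  assumes M: "prob_space M" and Z: "stationary_ergodic M Z"
    and Q [measurable]: "Measurable.pred borel Q" and Q1: "AE \<omega> in M. Q (Z 1 \<omega>)"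
  shows "AE \<omega> in M. \<forall>j\<ge>1. Q (Z j \<omega>)"
proof -
  interpret P: ergodic_transformation "process_law M Z" seq_shift
    by (rule ergodic_transformation_process_law[OF M Z])
  note process = measurable_process[OF Z]
  have "{s \<in> space (Pi\<^sub>M UNIV (\<lambda>_. borel)). Q (s 0)} \<in> sets (Pi\<^sub>M UNIV (\<lambda>_. borel))"
    by measurable
  then have Q0: "AE s in process_law M Z. Q (s 0)"
    unfolding process_law_def using Q1 by (simp add: AE_distr_iff[OF process])
  have "AE s in process_law M Z. Q (s j)" for j
  proof -
    have "AE s in distr (process_law M Z) (process_law M Z) (seq_shift ^^ j). Q (s 0)"
      unfolding P.distr_funpow by (rule Q0)
    then show ?thesis
      by (auto dest: AE_distrD[OF measurable_compose_n[OF P.measurable_T]] simp: funpow_seq_shift)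
  qed
  then have "AE s in process_law M Z. \<forall>j. Q (s j)"
    by (simp add: AE_all_countable)
  then have "AE \<omega> in M. \<forall>j. Q (Z (Suc j) \<omega>)"
    unfolding process_law_def by (auto dest: AE_distrD[OF process])
  then show ?thesis
    by eventually_elim (metis One_nat_def Suc_le_D)
qed

theorem stationary_ergodic_averages_tendsto:
  fixes F :: "'b::topological_space \<Rightarrow> real"
  assumes M: "prob_space M" and Z: "stationary_ergodic M Z"
    and F: "F \<in> borel_measurable borel" and F1: "integrable M (\<lambda>\<omega>. F (Z 1 \<omega>))"
  shows "AE \<omega> in M. (\<lambda>n. (\<Sum>j=1..n. F (Z j \<omega>)) / n) \<longlonglongrightarrow> (\<integral>\<omega>. F (Z 1 \<omega>) \<partial>M)"
proof -
  interpret P: ergodic_transformation "process_law M Z" seq_shift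
    by (rule ergodic_transformation_process_law[OF M Z])
  note process = measurable_process[OF Z]
  have F0: "(\<lambda>s. F (s 0)) \<in> borel_measurable (Pi\<^sub>M UNIV (\<lambda>_. borel))"
    using F by measurable
  have "integrable (process_law M Z) (\<lambda>s. F (s 0))"
    unfolding process_law_def using F1 by (simp add: integrable_distr_eq[OF process F0])
  then have "AE s in process_law M Z.
      (\<lambda>n. birkhoff_sum seq_shift (\<lambda>s. F (s 0)) n s / n) \<longlonglongrightarrow> P.expectation (\<lambda>s. F (s 0))"
    by (rule P.birkhoff_ergodic)
  moreover have "P.expectation (\<lambda>s. F (s 0)) = (\<integral>\<omega>. F (Z 1 \<omega>) \<partial>M)"
    unfolding process_law_def by (simp add: integral_distr[OF process F0])
  moreover have "birkhoff_sum seq_shift (\<lambda>s. F (s 0)) n (\<lambda>i. Z (Suc i) \<omega>) = (\<Sum>j=1..n. F (Z j \<omega>))"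
    for n \<omega> by (simp add: birkhoff_sum_def funpow_seq_shift sum.atLeast1_atMost_eq)
  ultimately show ?thesis
    unfolding process_law_def by (auto dest: AE_distrD[OF process])
qed

lemma clip_eq_max_min: "0 \<le> c \<Longrightarrow> clip c t = max (- c) (min c t)"
  by (auto simp: clip_def sgn_if min_def max_def)

lemma abs_clip_le: "0 \<le> c \<Longrightarrow> \<bar>clip c t\<bar> \<le> c"
  by (auto simp: clip_eq_max_min)

lemma abs_clip_diff_le: "0 \<le> c \<Longrightarrow> \<bar>clip c s - clip c t\<bar> \<le> \<bar>s - t\<bar>"
  by (auto simp: clip_eq_max_min min_def max_def abs_if)

lemma tendsto_quotient_of_averages:
  fixes u v :: "nat \<Rightarrow> real"
  assumes u: "(\<lambda>n. u n / n) \<longlonglongrightarrow> a" and v: "(\<lambda>n. v n / n) \<longlonglongrightarrow> p" and "0 < p"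
  shows "(\<lambda>n. if v n = 0 then 0 else u n / v n) \<longlonglongrightarrow> a / p"
proof -
  have "(\<lambda>n. (u n / n) / (v n / n)) \<longlonglongrightarrow> a / p"
    using u v \<open>0 < p\<close> by (intro tendsto_divide) auto
  moreover have "\<forall>\<^sub>F n in sequentially. 0 < v n / n"
    using order_tendstoD(1)[OF v \<open>0 < p\<close>] .
  then have "\<forall>\<^sub>F n in sequentially. (u n / n) / (v n / n) = (if v n = 0 then 0 else u n / v n)"
    by eventually_elim (auto simp: field_simps split: if_splits)
  ultimately show ?thesis by (rule Lim_transform_eventually)
qed

lemma tendsto_zero_ennrealI:
  fixes f :: "nat \<Rightarrow> ennreal"
  assumes "\<And>e::real. 0 < e \<Longrightarrow> \<forall>\<^sub>F n in sequentially. f n \<le> ennreal e"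
  shows "f \<longlonglongrightarrow> 0"
proof (rule order_tendstoI)
  fix u :: ennreal assume "0 < u"
  obtain e :: real where e: "0 < e" "ennreal e < u"
  proof (cases u)
    case (real r)
    then show ?thesis using that[of "r / 2"] \<open>0 < u\<close> by (simp add: ennreal_less_iff)
  qed (use that[of 1] in simp)
  show "\<forall>\<^sub>F n in sequentially. f n < u"
    using assms[OF e(1)] by eventually_elim (use e in auto)
qed simp

lemma abs_sum_le_suminf_tail:
  fixes u c :: "nat \<Rightarrow> real"
  assumes "summable c" "\<And>j. 0 \<le> c j" "\<And>j. \<bar>u j\<bar> \<le> c j"
  shows "\<bar>\<Sum>j\<in>{J..<K}. u j\<bar> \<le> (\<Sum>i. c (i + J))"
proof -
  have "\<bar>\<Sum>j\<in>{J..<K}. u j\<bar> \<le> (\<Sum>j\<in>{J..<K}. c j)"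
    by (rule order_trans[OF sum_abs sum_mono]) (use assms in auto)
  also have "\<dots> = (\<Sum>i\<in>{0..<K - J}. c (i + J))"
    using sum.shift_bounds_nat_ivl[of c 0 J "K - J"] by (cases "J \<le> K") simp_all
  also have "\<dots> \<le> (\<Sum>i. c (i + J))"
    using assms(1,2) by (intro sum_le_suminf summable_ignore_initial_segment) auto
  finally show ?thesis .
qed

lemma uniform_limit_truncated_series:
  fixes u :: "nat \<Rightarrow> nat \<Rightarrow> 'a \<Rightarrow> real" and v :: "nat \<Rightarrow> 'a \<Rightarrow> real" and c :: "nat \<Rightarrow> real"
  assumes c: "summable c" "\<And>j. 0 \<le> c j"
    and u_le: "\<And>n j x. x \<in> T \<Longrightarrow> \<bar>u n j x\<bar> \<le> c j"
    and v_le: "\<And>j x. x \<in> T \<Longrightarrow> \<bar>v j x\<bar> \<le> c j"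
    and uv: "\<And>j. uniform_limit T (\<lambda>n. u n j) (v j) sequentially"
    and K: "filterlim K at_top sequentially"
  shows "uniform_limit T (\<lambda>n x. \<Sum>j<K n. u n j x) (\<lambda>x. \<Sum>j. v j x) sequentially"
  unfolding uniform_limit_iff
proof (intro allI impI)
  fix e :: real assume "0 < e"
  obtain J where "norm (\<Sum>i. c (i + J)) < e / 3"
    using suminf_exist_split[of "e / 3" c] \<open>0 < e\<close> c by auto
  then have tail: "(\<Sum>i. c (i + J)) < e / 3" by simp
  have "\<forall>\<^sub>F n in sequentially. \<forall>j\<in>{..<J}. \<forall>x\<in>T. dist (u n j x) (v j x) < e / (3 * (J + 1))"
    using uv \<open>0 < e\<close> unfolding uniform_limit_iff by (intro eventually_ball_finite) (auto simp del: dist_real_def)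
  moreover have "\<forall>\<^sub>F n in sequentially. J \<le> K n"
    using K by (simp add: filterlim_at_top)
  ultimately show "\<forall>\<^sub>F n in sequentially. \<forall>x\<in>T. dist (\<Sum>j<K n. u n j x) (\<Sum>j. v j x) < e"
  proof eventually_elim
    case (elim n)
    show ?case
    proof
      fix x assume x: "x \<in> T"
      have "summable (\<lambda>j. v j x)"
        by (rule summable_comparison_test'[where g=c and N=0]) (use c(1) v_le[OF x] in auto)
      then have split_v: "(\<Sum>j. v j x) = (\<Sum>i. v (i + J) x) + (\<Sum>j<J. v j x)"
        by (rule suminf_split_initial_segment)
      have "(\<Sum>j\<in>{0..<J}. u n j x) + (\<Sum>j\<in>{J..<K n}. u n j x) = (\<Sum>j\<in>{0..<K n}. u n j x)"
        using elim(2) by (intro sum.atLeastLessThan_concat) auto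
      then have split_u: "(\<Sum>j<K n. u n j x) = (\<Sum>j<J. u n j x) + (\<Sum>j\<in>{J..<K n}. u n j x)"
        by (simp add: atLeast0LessThan)
      have "\<bar>\<Sum>j\<in>{J..<K n}. u n j x\<bar> \<le> (\<Sum>i. c (i + J))"
        using c u_le[OF x] by (rule abs_sum_le_suminf_tail)
      moreover have "\<bar>\<Sum>i. v (i + J) x\<bar> \<le> (\<Sum>i. c (i + J))"
        using norm_suminf_le[of "\<lambda>i. v (i + J) x" "\<lambda>i. c (i + J)"] v_le[OF x]
          summable_ignore_initial_segment[OF c(1)] by auto
      moreover have "\<bar>\<Sum>j<J. u n j x - v j x\<bar> \<le> e / 3"
      proof -
        have "\<bar>\<Sum>j<J. u n j x - v j x\<bar> \<le> (\<Sum>j<J. \<bar>u n j x - v j x\<bar>)"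
          by (rule sum_abs)
        also have "\<dots> \<le> (\<Sum>j<J. e / (3 * (J + 1)))"
          by (intro sum_mono less_imp_le) (use elim(1) x in \<open>auto simp: dist_real_def\<close>)
        also have "\<dots> \<le> e / 3"
          using \<open>0 < e\<close> by (simp add: field_simps)
        finally show ?thesis .
      qed
      ultimately show "dist (\<Sum>j<K n. u n j x) (\<Sum>j. v j x) < e"
        using tail unfolding dist_real_def split_u split_v sum_subtractf by linarith
    qed
  qed
qed

lemma uniform_limit_finitely_many_classes:
  assumes "finite (c ` T)"
    and tendsto: "\<And>x. x \<in> T \<Longrightarrow> (\<lambda>n. f n x) \<longlonglongrightarrow> g x"
    and class_invariant: "\<And>n x y. x \<in> T \<Longrightarrow> y \<in> T \<Longrightarrow> c x = c y \<Longrightarrow> f n x = f n y \<and> g x = g y"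
  shows "uniform_limit T f g sequentially"
  unfolding uniform_limit_iff
proof (intro allI impI)
  fix e :: real assume "0 < e"
  define rep where "rep C = (SOME x. x \<in> T \<and> c x = C)" for C
  have rep: "rep (c x) \<in> T \<and> c (rep (c x)) = c x" if "x \<in> T" for x
    unfolding rep_def by (rule someI_ex) (use that in blast)
  have "\<forall>\<^sub>F n in sequentially. \<forall>y\<in>rep ` c ` T. dist (f n y) (g y) < e"
    using assms(1) tendsto rep \<open>0 < e\<close> by (intro eventually_ball_finite) (auto simp: tendsto_iff simp del: dist_real_def)
  then show "\<forall>\<^sub>F n in sequentially. \<forall>x\<in>T. dist (f n x) (g x) < e"
  proof eventually_elim
    case (elim n)
    show ?case
    proof
      fix x assume "x \<in> T"
      then have "dist (f n (rep (c x))) (g (rep (c x))) < e"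
        using elim by blast
      moreover have "f n (rep (c x)) = f n x \<and> g (rep (c x)) = g x"
        using rep[OF \<open>x \<in> T\<close>] \<open>x \<in> T\<close> by (intro class_invariant) auto
      ultimately show "dist (f n x) (g x) < e" by simp
    qed
  qed
qed

lemma prob_norm_gt_tendsto_zero:
  fixes M :: "'x::real_normed_vector measure"
  assumes "prob_space M" and sets: "sets M = sets borel"
  shows "(\<lambda>n::nat. measure M {x. n < norm x}) \<longlonglongrightarrow> 0"
proof -
  interpret prob_space M by fact
  have space: "space M = UNIV" using sets_eq_imp_space_eq[OF sets] by simp
  have [measurable]: "{x. r < norm x} \<in> sets M" for r :: real
    unfolding sets by measurable
  have "(\<lambda>n::nat. prob {x. n < norm x}) \<longlonglongrightarrow> prob (\<Inter>n::nat. {x. n < norm x})"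
    by (intro finite_Lim_measure_decseq) (auto simp: decseq_def)
  moreover have "(\<Inter>n::nat. {x. n < norm x}) = {}"
  proof -
    have "x \<notin> (\<Inter>n::nat. {x. n < norm x})" for x
    proof -
      obtain n :: nat where "norm x < n" using reals_Archimedean2 by blast
      then show ?thesis by (auto intro!: exI[of _ n])
    qed
    then show ?thesis by blast
  qed
  ultimately show ?thesis by (metis measure_empty)
qed

lemma nn_integral_square_le:
  assumes "prob_space M" and B: "B \<in> sets M" and S: "AE x in M. x \<in> S"
    and bound: "\<And>x. x \<in> S \<Longrightarrow> \<bar>h x\<bar> \<le> W"
    and small: "\<And>x. x \<in> S \<Longrightarrow> x \<notin> B \<Longrightarrow> (h x)\<^sup>2 \<le> \<epsilon>" and "0 \<le> \<epsilon>"
  shows "(\<integral>\<^sup>+ x. ennreal ((h x)\<^sup>2) \<partial>M) \<le> ennreal (\<epsilon> + W\<^sup>2 * measure M B)"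
proof -
  interpret prob_space M by fact
  have "(\<integral>\<^sup>+ x. ennreal ((h x)\<^sup>2) \<partial>M) \<le> (\<integral>\<^sup>+ x. ennreal \<epsilon> + ennreal (W\<^sup>2) * indicator B x \<partial>M)"
  proof (intro nn_integral_mono_AE, use S in eventually_elim)
    case (elim x)
    show ?case
    proof (cases "x \<in> B")
      case True
      have "\<bar>h x\<bar>\<^sup>2 \<le> W\<^sup>2"
        using bound[OF elim] by (intro power_mono) auto
      then have "ennreal ((h x)\<^sup>2) \<le> ennreal (W\<^sup>2)"
        by (intro ennreal_leI) simp
      then show ?thesis using True by (simp add: add_increasing)
    qed (use small[OF elim] in \<open>simp add: ennreal_leI\<close>)
  qed
  also have "\<dots> = ennreal (\<epsilon> + W\<^sup>2 * prob B)"
    using B \<open>0 \<le> \<epsilon>\<close> by (simp add: nn_integral_add nn_integral_cmult_indicator emeasure_eq_measure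
      prob_space ennreal_plus ennreal_mult)
  finally show ?thesis .
qed

text \<open>Outside a large ball the measure is small; inside it the convergence is uniform.\<close>
lemma tendsto_nn_integral_square_diff_zero:
  fixes M :: "'x::real_normed_vector measure" and f :: "nat \<Rightarrow> 'x \<Rightarrow> real"
  assumes "prob_space M" and sets: "sets M = sets borel" and S: "AE x in M. x \<in> S"
    and bounded: "\<forall>\<^sub>F n in sequentially. \<forall>x\<in>S. \<bar>f n x - g x\<bar> \<le> W"
    and uniform: "\<And>R. uniform_limit (S \<inter> cball 0 R) f g sequentially"
  shows "(\<lambda>n. \<integral>\<^sup>+ x. ennreal ((f n x - g x)\<^sup>2) \<partial>M) \<longlonglongrightarrow> 0"
proof (rule tendsto_zero_ennrealI)
  fix e :: real assume "0 < e"
  define B where "B R = {x :: 'x. real R < norm x}" for R :: nat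
  have B: "B R \<in> sets M" for R
    unfolding B_def sets by measurable
  have "0 < e / (2 * (W\<^sup>2 + 1))"
    using \<open>0 < e\<close> by (simp add: add_nonneg_pos)
  then obtain R where R: "measure M (B R) < e / (2 * (W\<^sup>2 + 1))"
    using order_tendstoD(2)[OF prob_norm_gt_tendsto_zero[OF \<open>prob_space M\<close> sets]]
    unfolding B_def by (auto simp: eventually_sequentially)
  have "W\<^sup>2 * measure M (B R) \<le> W\<^sup>2 * (e / (2 * (W\<^sup>2 + 1)))"
    using R by (intro mult_left_mono) auto
  also have "\<dots> \<le> e / 2"
    using \<open>0 < e\<close> by (simp add: field_simps add_pos_nonneg)
  finally have tail: "e / 2 + W\<^sup>2 * measure M (B R) \<le> e" by simp
  have "\<forall>\<^sub>F n in sequentially. \<forall>x\<in>S \<inter> cball 0 R. dist (f n x) (g x) < sqrt (e / 2)"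
    using uniform \<open>0 < e\<close> unfolding uniform_limit_iff by simp
  with bounded show "\<forall>\<^sub>F n in sequentially. (\<integral>\<^sup>+ x. ennreal ((f n x - g x)\<^sup>2) \<partial>M) \<le> ennreal e"
  proof eventually_elim
    case (elim n)
    have "(f n x - g x)\<^sup>2 \<le> e / 2" if "x \<in> S" "x \<notin> B R" for x
    proof -
      have "\<bar>f n x - g x\<bar> < sqrt (e / 2)"
        using elim(2) that by (auto simp: B_def dist_real_def)
      then show ?thesis
        using \<open>0 < e\<close> by (metis less_imp_le real_sqrt_abs real_sqrt_less_iff)
    qed
    then have "(\<integral>\<^sup>+ x. ennreal ((f n x - g x)\<^sup>2) \<partial>M) \<le> ennreal (e / 2 + W\<^sup>2 * measure M (B R))"
      using elim(1) \<open>0 < e\<close> by (intro nn_integral_square_le[OF \<open>prob_space M\<close> B S]) auto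
    also have "\<dots> \<le> ennreal e"
      using tail by (rule ennreal_leI)
    finally show ?case .
  qed
qed

section \<open>Nested cube partitions\<close>

context
  fixes A :: "nat \<Rightarrow> 'x::euclidean_space \<Rightarrow> 'x set"
  assumes partitions: "nested_cube_partitions A"
begin

lemma mem_cell: "1 \<le> k \<Longrightarrow> x \<in> A k x"
  using partitions unfolding nested_cube_partitions_def by blast

lemma cell_eq_cell: "1 \<le> k \<Longrightarrow> y \<in> A k x \<Longrightarrow> A k y = A k x"
  using partitions unfolding nested_cube_partitions_def by blast

lemma cell_borel: "1 \<le> k \<Longrightarrow> A k x \<in> sets borel"
  using partitions unfolding nested_cube_partitions_def by blast

lemma cell_between_boxes:
  assumes "1 \<le> k"
  obtains a where "box a (a + (1 / 2 ^ (k + 2)) *\<^sub>R One) \<subseteq> A k x"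
    and "A k x \<subseteq> cbox a (a + (1 / 2 ^ (k + 2)) *\<^sub>R One)"
  using partitions assms unfolding nested_cube_partitions_def is_cube_def by blast

lemma norm_diff_le_in_cell:
  assumes k: "1 \<le> k" and y: "y \<in> A k x"
  shows "norm (y - x) \<le> DIM('x) / 2 ^ (k + 2)"
proof -
  define h :: real where "h = 1 / 2 ^ (k + 2)"
  obtain a where cell: "A k x \<subseteq> cbox a (a + h *\<^sub>R One)"
    using cell_between_boxes[OF k] unfolding h_def by blast
  have "\<bar>(y - x) \<bullet> b\<bar> \<le> h" if "b \<in> Basis" for b
  proof -
    have "x \<in> cbox a (a + h *\<^sub>R One)" "y \<in> cbox a (a + h *\<^sub>R One)"
      using cell mem_cell[OF k] y by blast+
    then have "a \<bullet> b \<le> x \<bullet> b" "x \<bullet> b \<le> a \<bullet> b + h" "a \<bullet> b \<le> y \<bullet> b" "y \<bullet> b \<le> a \<bullet> b + h"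
      using that by (auto simp: mem_box inner_simps)
    then show ?thesis by (simp add: inner_diff_left abs_le_iff)
  qed
  then have "norm (y - x) \<le> (\<Sum>b\<in>(Basis::'x set). h)"
    by (intro order_trans[OF norm_le_l1 sum_mono])
  then show ?thesis by (simp add: h_def)
qed

lemma countable_cell_representatives:
  obtains D where "countable D" and "\<And>k x. 1 \<le> k \<Longrightarrow> \<exists>d\<in>D. A k d = A k x"
proof -
  obtain D :: "'x set" where D: "countable D" "\<And>U. open U \<Longrightarrow> U \<noteq> {} \<Longrightarrow> \<exists>d\<in>D. d \<in> U"
    using countable_dense_setE by blast
  have "\<exists>d\<in>D. A k d = A k x" if k: "1 \<le> k" for k x
  proof -
    obtain a where "box a (a + (1 / 2 ^ (k + 2)) *\<^sub>R One) \<subseteq> A k x"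
      using cell_between_boxes[OF k] by blast
    moreover have "box a (a + (1 / 2 ^ (k + 2)) *\<^sub>R One) \<noteq> {}"
      by (simp add: box_ne_empty inner_simps)
    then obtain d where "d \<in> D" "d \<in> box a (a + (1 / 2 ^ (k + 2)) *\<^sub>R One)"
      using D(2)[OF open_box] by blast
    ultimately show ?thesis
      using cell_eq_cell[OF k] by blast
  qed
  with D(1) show ?thesis using that by blast
qed

lemma emeasure_lborel_cell_ge:
  assumes k: "1 \<le> k"
  shows "ennreal ((1 / 2 ^ (k + 2)) ^ DIM('x)) \<le> emeasure lborel (A k x)"
proof -
  define h :: real where "h = 1 / 2 ^ (k + 2)"
  obtain a where a: "box a (a + h *\<^sub>R One) \<subseteq> A k x"
    using cell_between_boxes[OF k] unfolding h_def by blast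
  have "emeasure lborel (box a (a + h *\<^sub>R One)) = ennreal (h ^ DIM('x))"
    by (simp add: h_def emeasure_lborel_box_eq inner_simps prod_constant)
  moreover have "emeasure lborel (box a (a + h *\<^sub>R One)) \<le> emeasure lborel (A k x)"
    using a cell_borel[OF k] by (intro emeasure_mono) auto
  ultimately show ?thesis by (simp add: h_def)
qed

lemma disjoint_family_on_cells:
  assumes k: "1 \<le> k"
  shows "disjoint_family_on id ((\<lambda>x. A k x) ` T)"
  unfolding disjoint_family_on_def
proof (intro ballI impI)
  fix C C' assume "C \<in> (\<lambda>x. A k x) ` T" "C' \<in> (\<lambda>x. A k x) ` T" "C \<noteq> C'"
  then obtain x x' where "C = A k x" "C' = A k x'" by blast
  then show "id C \<inter> id C' = {}"
    using \<open>C \<noteq> C'\<close> cell_eq_cell[OF k] by (metis disjoint_iff id_apply)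
qed

lemma cells_subset_cball:
  assumes "bounded T" and k: "1 \<le> k"
  obtains R where "\<And>x. x \<in> T \<Longrightarrow> A k x \<subseteq> cball 0 R"
proof -
  obtain R where R: "\<And>x. x \<in> T \<Longrightarrow> norm x \<le> R"
    using \<open>bounded T\<close> by (auto simp: bounded_iff)
  have "A k x \<subseteq> cball 0 (R + DIM('x) / 2 ^ (k + 2))" if "x \<in> T" for x
  proof
    fix y assume "y \<in> A k x"
    then have "norm y \<le> norm x + norm (y - x)" "norm (y - x) \<le> DIM('x) / 2 ^ (k + 2)"
      using norm_triangle_ineq[of x "y - x"] norm_diff_le_in_cell[OF k] by auto
    then show "y \<in> cball 0 (R + DIM('x) / 2 ^ (k + 2))" using R[OF that] by simp
  qed
  then show ?thesis by (rule that)
qed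

text \<open>Disjoint cells of volume \<open>v\<close> inside a ball of volume \<open>V\<close> number at most \<open>V / v\<close>.\<close>
lemma finite_cells_of_bounded:
  assumes "bounded T" and k: "1 \<le> k"
  shows "finite ((\<lambda>x. A k x) ` T)"
proof (rule ccontr)
  assume infinite: "infinite ((\<lambda>x. A k x) ` T)"
  define v :: real where "v = (1 / 2 ^ (k + 2)) ^ DIM('x)"
  obtain R where in_ball: "\<And>x. x \<in> T \<Longrightarrow> A k x \<subseteq> cball 0 R"
    using cells_subset_cball[OF assms] by blast
  define V where "V = measure lborel (cball (0::'x) R)"
  obtain F where F: "finite F" "card F = nat \<lceil>V / v\<rceil> + 1" "F \<subseteq> (\<lambda>x. A k x) ` T"
    using infinite_arbitrarily_large[OF infinite] by blast
  have "ennreal (card F * v) = (\<Sum>C\<in>F. ennreal v)"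
    by (simp add: v_def ennreal_of_nat_eq_real_of_nat ennreal_mult)
  also have "\<dots> \<le> (\<Sum>C\<in>F. emeasure lborel C)"
    using F(3) emeasure_lborel_cell_ge[OF k] unfolding v_def by (intro sum_mono) auto
  also have "\<dots> = emeasure lborel (\<Union>C\<in>F. id C)"
    using sum_emeasure[of id F lborel] F(1,3) cell_borel[OF k]
      disjoint_family_on_mono[OF F(3) disjoint_family_on_cells[OF k]] by auto
  also have "\<dots> \<le> emeasure lborel (cball (0::'x) R)"
    using F(3) in_ball by (intro emeasure_mono) auto
  also have "\<dots> = ennreal V"
    unfolding V_def using emeasure_bounded_finite[of "cball (0::'x) R"]
    by (simp add: emeasure_eq_ennreal_measure)
  finally have "card F * v \<le> V"
    by (subst (asm) ennreal_le_iff) (auto simp: V_def)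
  moreover have "V / v < card F"
    using F(2) by linarith
  then have "V < card F * v"
    by (simp add: v_def divide_less_eq)
  ultimately show False by simp
qed

lemma AE_in_cell_support:
  assumes "finite_measure \<mu>" and sets: "sets \<mu> = sets borel"
  shows "AE x in \<mu>. x \<in> cell_support \<mu> A"
proof -
  interpret finite_measure \<mu> by fact
  obtain D where D: "countable D" "\<And>k x. 1 \<le> k \<Longrightarrow> \<exists>d\<in>D. A k d = A k x"
    using countable_cell_representatives by blast
  have "AE x in \<mu>. x \<notin> A k d" if "1 \<le> k" "measure \<mu> (A k d) = 0" for k d
    using that cell_borel[of k d] sets
    by (intro AE_not_in) (simp add: null_sets_def emeasure_eq_measure)
  then have "AE x in \<mu>. \<forall>k. \<forall>d\<in>D. 1 \<le> k \<and> measure \<mu> (A k d) = 0 \<longrightarrow> x \<notin> A k d"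
    unfolding AE_all_countable AE_ball_countable[OF D(1)] by (auto intro: AE_I2)
  then show ?thesis
  proof eventually_elim
    case (elim x)
    have "0 < measure \<mu> (A k x)" if k: "1 \<le> k" for k
    proof -
      obtain d where "d \<in> D" "A k d = A k x" using D(2)[OF k] by blast
      then have "measure \<mu> (A k x) \<noteq> 0" using elim k mem_cell[OF k, of x] by metis
      then show ?thesis using measure_nonneg[of \<mu> "A k x"] by linarith
    qed
    then show ?case unfolding cell_support_def by blast
  qed
qed

lemma bounded_cell_support:
  assumes "finite_measure \<mu>" and sets: "sets \<mu> = sets borel" and R: "AE x in \<mu>. norm x \<le> R"
  shows "bounded (cell_support \<mu> A)"
proof -
  interpret finite_measure \<mu> by fact
  define B where "B = {y :: 'x. R < norm y}"
  have B: "B \<in> sets \<mu>" unfolding B_def sets by measurable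
  have "measure \<mu> B = 0"
    using R B AE_iff_measurable[OF B, of "\<lambda>x. norm x \<le> R"] sets_eq_imp_space_eq[OF sets]
    by (auto simp: B_def not_le emeasure_eq_measure)
  have "norm x \<le> R + DIM('x) / 2 ^ 3" if x: "x \<in> cell_support \<mu> A" for x
  proof -
    have "\<not> A 1 x \<subseteq> B"
    proof
      assume "A 1 x \<subseteq> B"
      then have "measure \<mu> (A 1 x) \<le> measure \<mu> B"
        using B by (intro finite_measure_mono) auto
      then show False using x \<open>measure \<mu> B = 0\<close> unfolding cell_support_def by fastforce
    qed
    then obtain y where "y \<in> A 1 x" "norm y \<le> R"
      unfolding B_def by (metis mem_Collect_eq not_less subsetI)
    moreover have "norm x \<le> norm y + norm (y - x)"
      using norm_triangle_ineq4[of y "y - x"] by simp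
    ultimately show ?thesis
      using norm_diff_le_in_cell[of 1 y x] by simp
  qed
  then show ?thesis unfolding bounded_iff by blast
qed

end

section \<open>Consistency of the partitioning estimate\<close>

lemma uniform_limit_clip:
  assumes "uniform_limit T f g F" and "0 \<le> c"
  shows "uniform_limit T (\<lambda>n x. clip c (f n x)) (\<lambda>x. clip c (g x)) F"
proof (rule uniform_limitI)
  fix e :: real assume "0 < e"
  with uniform_limitD[OF assms(1)] have "\<forall>\<^sub>F n in F. \<forall>x\<in>T. dist (f n x) (g x) < e" .
  then show "\<forall>\<^sub>F n in F. \<forall>x\<in>T. dist (clip c (f n x)) (clip c (g x)) < e"
  proof eventually_elim
    case (elim n)
    then show ?case
      using abs_clip_diff_le[OF \<open>0 \<le> c\<close>] unfolding dist_real_def by (meson le_less_trans)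
  qed
qed

lemma sum_atLeast2_atMost_shift: "(\<Sum>k\<in>{2..m}. g k) = (\<Sum>j<m - 1. g (j + 2::nat))"
proof (induction m)
  case (Suc m)
  show ?case
  proof (cases "m = 0")
    case False
    then have "{2..Suc m} = insert (Suc m) {2..m}" and "{..<Suc m - 1} = insert (m - 1) {..<m - 1}"
      by auto
    then show ?thesis using Suc False by simp
  qed simp
qed simp

lemma emp_cell_mean_cong: "A k x = A k y \<Longrightarrow> emp_cell_mean X Y A k n x \<omega> = emp_cell_mean X Y A k n y \<omega>"
  by (simp add: emp_cell_mean_def Let_def)

lemma cell_mean_cong: "A k x = A k y \<Longrightarrow> cell_mean M X Y A k x = cell_mean M X Y A k y"
  by (simp add: cell_mean_def)

lemma abs_emp_cell_mean_le:
  assumes "\<And>j. 1 \<le> j \<Longrightarrow> \<bar>Y j \<omega>\<bar> \<le> D" and "0 \<le> D"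
  shows "\<bar>emp_cell_mean X Y A k n x \<omega>\<bar> \<le> D"
proof -
  define den where "den = (\<Sum>j\<in>{1..n}. indicator (A k x) (X j \<omega>) :: real)"
  define num where "num = (\<Sum>j\<in>{1..n}. Y j \<omega> * indicator (A k x) (X j \<omega>))"
  have "\<bar>num\<bar> \<le> D * den"
    unfolding num_def den_def sum_distrib_left
    by (rule order_trans[OF sum_abs sum_mono]) (use assms(1) in \<open>simp add: indicator_def abs_mult\<close>)
  moreover have "0 \<le> den" unfolding den_def by (intro sum_nonneg) auto
  ultimately have "\<bar>if den = 0 then 0 else num / den\<bar> \<le> D"
    using \<open>0 \<le> D\<close> by (simp add: pos_divide_le_eq)
  then show ?thesis
    unfolding emp_cell_mean_def Let_def den_def[symmetric] num_def[symmetric] .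
qed

lemma clip_bounds_sums: "(\<lambda>j. L / 2 ^ (j + 2) :: real) sums (L / 2)"
proof -
  have "(\<lambda>j. L / 4 * (1 / 2) ^ j :: real) sums (L / 4 * (1 / (1 - 1 / 2)))"
    by (intro sums_mult geometric_sums) simp
  then show ?thesis by (simp add: power_add field_simps)
qed

lemma m_hat_eq_truncated_series:
  "m_hat X Y A N L n x \<omega> = emp_cell_mean X Y A 1 n x \<omega> +
    (\<Sum>j<N n - 1. clip (L / 2 ^ (j + 2))
      (emp_cell_mean X Y A (j + 2) n x \<omega> - emp_cell_mean X Y A (j + 1) n x \<omega>))"
  unfolding m_hat_def sum_atLeast2_atMost_shift by simp

lemma abs_m_hat_le:
  assumes "\<And>j. 1 \<le> j \<Longrightarrow> \<bar>Y j \<omega>\<bar> \<le> D" and "0 \<le> D" and "0 \<le> L"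
  shows "\<bar>m_hat X Y A N L n x \<omega>\<bar> \<le> D + L / 2"
proof -
  have "\<bar>\<Sum>j<N n - 1. clip (L / 2 ^ (j + 2))
      (emp_cell_mean X Y A (j + 2) n x \<omega> - emp_cell_mean X Y A (j + 1) n x \<omega>)\<bar>
      \<le> (\<Sum>j<N n - 1. L / 2 ^ (j + 2))"
    by (rule order_trans[OF sum_abs sum_mono]) (simp add: abs_clip_le \<open>0 \<le> L\<close>)
  also have "\<dots> \<le> L / 2"
    using sum_le_suminf[of "\<lambda>j. L / 2 ^ (j + 2)" "{..<N n - 1}"] clip_bounds_sums[of L] \<open>0 \<le> L\<close>
    by (auto simp: sums_iff)
  finally show ?thesis
    using abs_emp_cell_mean_le[where Y=Y and \<omega>=\<omega>, OF assms(1,2), of X A 1 n x]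
    unfolding m_hat_eq_truncated_series by linarith
qed

lemma measurable_fst_snd_borel [measurable]:
  "fst \<in> borel_measurable (borel :: ('a::topological_space \<times> 'b::topological_space) measure)"
  "snd \<in> borel_measurable (borel :: ('a \<times> 'b) measure)"
  by (intro borel_measurable_continuous_onI continuous_intros)+

locale cell_regression = prob_space M for M :: "'o measure" +
  fixes X :: "nat \<Rightarrow> 'o \<Rightarrow> 'x::euclidean_space" and Y :: "nat \<Rightarrow> 'o \<Rightarrow> real"
    and A :: "nat \<Rightarrow> 'x \<Rightarrow> 'x set"
  assumes stationary_ergodic: "stationary_ergodic M (\<lambda>i \<omega>. (X i \<omega>, Y i \<omega>))"
    and integrable_Y: "integrable M (Y 1)"
    and partitions: "nested_cube_partitions A"
begin

abbreviation law :: "'x measure" where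
  "law \<equiv> distr M borel (X 1)"

abbreviation support :: "'x set" where
  "support \<equiv> cell_support law A"

lemma measurable_XY [measurable]: "X 1 \<in> borel_measurable M" "Y 1 \<in> borel_measurable M"
proof -
  have "(\<lambda>\<omega>. (X 1 \<omega>, Y 1 \<omega>)) \<in> borel_measurable M"
    using stationary_ergodic unfolding stationary_ergodic_def by simp
  from measurable_compose[OF this measurable_fst_snd_borel(1)]
    measurable_compose[OF this measurable_fst_snd_borel(2)]
  show "X 1 \<in> borel_measurable M" "Y 1 \<in> borel_measurable M" by simp_all
qed

lemma prob_space_law: "prob_space law"
  by (rule prob_space_distr) (rule measurable_XY)

lemma measure_law: "C \<in> sets borel \<Longrightarrow> measure law C = measure M {\<omega> \<in> space M. X 1 \<omega> \<in> C}"
  by (subst measure_distr[OF measurable_XY(1)]) (auto intro: arg_cong[where f="measure M"])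

lemma AE_in_support: "AE x in law. x \<in> support"
  using prob_space.finite_measure[OF prob_space_law] partitions
  by (intro AE_in_cell_support) auto

lemma AE_cell_sum_average_tendsto:
  assumes C [measurable]: "C \<in> sets borel"
  shows "AE \<omega> in M. (\<lambda>n. (\<Sum>j=1..n. Y j \<omega> * indicator C (X j \<omega>)) / n)
    \<longlonglongrightarrow> (\<integral>\<omega>. indicator C (X 1 \<omega>) * Y 1 \<omega> \<partial>M)"
proof -
  have "integrable M (\<lambda>\<omega>. Y 1 \<omega> * indicator C (X 1 \<omega>))"
  proof (rule Bochner_Integration.integrable_bound[OF integrable_Y])
    show "(\<lambda>\<omega>. Y 1 \<omega> * indicator C (X 1 \<omega>)) \<in> borel_measurable M" by measurable
  qed (auto simp: indicator_def)
  moreover have "(\<lambda>p. snd p * indicator C (fst p) :: real) \<in> borel_measurable borel"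
    by measurable
  ultimately show ?thesis
    using stationary_ergodic_averages_tendsto[OF prob_space_axioms stationary_ergodic,
        of "\<lambda>p. snd p * indicator C (fst p)"] by (simp add: mult.commute)
qed

lemma AE_cell_frequency_tendsto:
  assumes C [measurable]: "C \<in> sets borel"
  shows "AE \<omega> in M. (\<lambda>n. (\<Sum>j=1..n. indicator C (X j \<omega>)) / n) \<longlonglongrightarrow> measure law C"
proof -
  have "(\<integral>\<omega>. indicator C (X 1 \<omega>) \<partial>M) = (\<integral>x. indicator C x \<partial>law :: real)"
    by (rule integral_distr[symmetric, OF measurable_XY(1)]) simp
  also have "\<dots> = measure law C"
    using C finite_measure.emeasure_finite[OF prob_space.finite_measure[OF prob_space_law], of C]
    by (simp add: less_top)
  finally have frequency: "(\<integral>\<omega>. indicator C (X 1 \<omega>) \<partial>M) = measure law C" .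
  have "integrable M (\<lambda>\<omega>. indicator C (X 1 \<omega>) :: real)"
  proof (rule integrable_const_bound[where B=1])
    show "(\<lambda>\<omega>. indicator C (X 1 \<omega>) :: real) \<in> borel_measurable M" by measurable
  qed (auto simp: indicator_def)
  moreover have "(\<lambda>p :: 'x \<times> real. indicator C (fst p) :: real) \<in> borel_measurable borel"
    by measurable
  ultimately have "AE \<omega> in M. (\<lambda>n. (\<Sum>j=1..n. indicator C (X j \<omega>)) / n)
      \<longlonglongrightarrow> (\<integral>\<omega>. indicator C (X 1 \<omega>) \<partial>M)"
    using stationary_ergodic_averages_tendsto[OF prob_space_axioms stationary_ergodic,
        of "\<lambda>p :: 'x \<times> real. indicator C (fst p)"] by simp
  then show ?thesis unfolding frequency .
qed

lemma emp_cell_mean_tendsto: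
  assumes k: "1 \<le> k" and positive: "0 < measure law (A k x)"
  shows "AE \<omega> in M. (\<lambda>n. emp_cell_mean X Y A k n x \<omega>) \<longlonglongrightarrow> cell_mean M (X 1) (Y 1) A k x"
proof -
  have C: "A k x \<in> sets borel" by (rule cell_borel[OF partitions k])
  from AE_cell_sum_average_tendsto[OF C] AE_cell_frequency_tendsto[OF C] show ?thesis
  proof eventually_elim
    case (elim \<omega>)
    then show ?case
      unfolding emp_cell_mean_def cell_mean_def Let_def measure_law[OF C, symmetric]
      by (intro tendsto_quotient_of_averages positive)
  qed
qed

definition cell_means_converge :: "'o \<Rightarrow> bool" where
  "cell_means_converge \<omega> \<longleftrightarrow> (\<forall>k\<ge>1. \<forall>x\<in>support.
     (\<lambda>n. emp_cell_mean X Y A k n x \<omega>) \<longlonglongrightarrow> cell_mean M (X 1) (Y 1) A k x)"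

text \<open>Every cell is the cell of a point of a countable set, so countably many null sets suffice.\<close>
lemma AE_cell_means_converge: "AE \<omega> in M. cell_means_converge \<omega>"
proof -
  obtain D where D: "countable D" "\<And>k x. 1 \<le> k \<Longrightarrow> \<exists>d\<in>D. A k d = A k x"
    using countable_cell_representatives[OF partitions] by blast
  have "AE \<omega> in M. 1 \<le> k \<and> 0 < measure law (A k d) \<longrightarrow>
      (\<lambda>n. emp_cell_mean X Y A k n d \<omega>) \<longlonglongrightarrow> cell_mean M (X 1) (Y 1) A k d" for k d
    using emp_cell_mean_tendsto[of k d] by (cases "1 \<le> k \<and> 0 < measure law (A k d)") auto
  then have "AE \<omega> in M. \<forall>k. \<forall>d\<in>D. 1 \<le> k \<and> 0 < measure law (A k d) \<longrightarrow>
      (\<lambda>n. emp_cell_mean X Y A k n d \<omega>) \<longlonglongrightarrow> cell_mean M (X 1) (Y 1) A k d"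
    unfolding AE_all_countable AE_ball_countable[OF D(1)] by blast
  then show ?thesis
  proof eventually_elim
    case (elim \<omega>)
    show ?case unfolding cell_means_converge_def
    proof (intro allI impI ballI)
      fix k :: nat and x assume k: "1 \<le> k" and x: "x \<in> support"
      obtain d where d: "d \<in> D" "A k d = A k x" using D(2)[OF k] by blast
      moreover have "0 < measure law (A k x)"
        using x k unfolding cell_support_def by blast
      ultimately have "(\<lambda>n. emp_cell_mean X Y A k n d \<omega>) \<longlonglongrightarrow> cell_mean M (X 1) (Y 1) A k d"
        using elim k by auto
      then show "(\<lambda>n. emp_cell_mean X Y A k n x \<omega>) \<longlonglongrightarrow> cell_mean M (X 1) (Y 1) A k x"
        unfolding emp_cell_mean_cong[of A k d x, OF d(2)] cell_mean_cong[of A k d x, OF d(2)] .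
    qed
  qed
qed

lemma uniform_limit_emp_cell_mean:
  assumes "cell_means_converge \<omega>" and "bounded T" and "T \<subseteq> support" and k: "1 \<le> k"
  shows "uniform_limit T (\<lambda>n x. emp_cell_mean X Y A k n x \<omega>) (cell_mean M (X 1) (Y 1) A k) sequentially"
proof (rule uniform_limit_finitely_many_classes[where c="A k"])
  show "finite (A k ` T)"
    using finite_cells_of_bounded[OF partitions \<open>bounded T\<close> k] by (simp add: image_def)
  show "(\<lambda>n. emp_cell_mean X Y A k n x \<omega>) \<longlonglongrightarrow> cell_mean M (X 1) (Y 1) A k x" if "x \<in> T" for x
    using assms that unfolding cell_means_converge_def by blast
qed (auto intro: emp_cell_mean_cong cell_mean_cong)

lemma uniform_limit_m_hat:
  assumes "cell_means_converge \<omega>" and "bounded T" and "T \<subseteq> support"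
    and "0 \<le> L" and N: "filterlim N at_top sequentially"
  shows "uniform_limit T (\<lambda>n x. m_hat X Y A N L n x \<omega>) (m_L M (X 1) (Y 1) A L) sequentially"
proof -
  note levels = uniform_limit_emp_cell_mean[OF assms(1-3)]
  have "filterlim (\<lambda>n. N n - 1) at_top sequentially"
    unfolding filterlim_at_top
  proof
    fix z :: nat
    have "\<forall>\<^sub>F n in sequentially. z + 1 \<le> N n" using N by (simp add: filterlim_at_top)
    then show "\<forall>\<^sub>F n in sequentially. z \<le> N n - 1" by eventually_elim auto
  qed
  moreover have "uniform_limit T
      (\<lambda>n x. clip (L / 2 ^ (j + 2)) (emp_cell_mean X Y A (j + 2) n x \<omega> - emp_cell_mean X Y A (j + 1) n x \<omega>))
      (\<lambda>x. clip (L / 2 ^ (j + 2)) (cell_mean M (X 1) (Y 1) A (j + 2) x - cell_mean M (X 1) (Y 1) A (j + 1) x))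
      sequentially" for j
    using \<open>0 \<le> L\<close> by (intro uniform_limit_clip uniform_limit_minus levels) simp_all
  ultimately have "uniform_limit T
      (\<lambda>n x. \<Sum>j<N n - 1. clip (L / 2 ^ (j + 2))
        (emp_cell_mean X Y A (j + 2) n x \<omega> - emp_cell_mean X Y A (j + 1) n x \<omega>))
      (\<lambda>x. \<Sum>j. clip (L / 2 ^ (j + 2))
        (cell_mean M (X 1) (Y 1) A (j + 2) x - cell_mean M (X 1) (Y 1) A (j + 1) x)) sequentially"
    using \<open>0 \<le> L\<close> clip_bounds_sums[of L]
    by (intro uniform_limit_truncated_series[where c="\<lambda>j. L / 2 ^ (j + 2)"])
      (auto simp: sums_iff abs_clip_le)
  from uniform_limit_add[OF levels[OF order_refl] this] show ?thesis
    unfolding m_hat_eq_truncated_series m_L_def by simp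
qed

lemma m_hat_tendsto:
  assumes "cell_means_converge \<omega>" and "x \<in> support"
    and "0 \<le> L" and "filterlim N at_top sequentially"
  shows "(\<lambda>n. m_hat X Y A N L n x \<omega>) \<longlonglongrightarrow> m_L M (X 1) (Y 1) A L x"
  using uniform_limit_m_hat[of \<omega> "{x}"] assms by (auto intro: tendsto_uniform_limitI)

lemma abs_m_L_le:
  fixes N :: "nat \<Rightarrow> nat"
  assumes "cell_means_converge \<omega>" and "x \<in> support"
    and "\<And>j. 1 \<le> j \<Longrightarrow> \<bar>Y j \<omega>\<bar> \<le> D" and "0 \<le> D" and "0 \<le> L"
    and "filterlim N at_top sequentially"
  shows "\<bar>m_L M (X 1) (Y 1) A L x\<bar> \<le> D + L / 2"
  using tendsto_rabs[OF m_hat_tendsto[OF assms(1,2,5,6)]]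
  by (rule LIMSEQ_le_const2) (blast intro: abs_m_hat_le[where Y=Y and \<omega>=\<omega>, OF assms(3-5)])

lemma AE_m_hat_uniform_limit:
  assumes "bounded support" and "0 \<le> L" and "filterlim N at_top sequentially"
  shows "AE \<omega> in M. uniform_limit support (\<lambda>n x. m_hat X Y A N L n x \<omega>) (m_L M (X 1) (Y 1) A L)
    sequentially"
  using AE_cell_means_converge by eventually_elim (use uniform_limit_m_hat assms in blast)

lemma AE_abs_Y_le:
  assumes "AE \<omega> in M. \<bar>Y 1 \<omega>\<bar> \<le> D"
  shows "AE \<omega> in M. \<forall>j\<ge>1. \<bar>Y j \<omega>\<bar> \<le> D"
proof -
  have "AE \<omega> in M. \<bar>snd (X 1 \<omega>, Y 1 \<omega>)\<bar> \<le> D"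
    using assms by simp
  then show ?thesis
    using stationary_ergodic_AE_all[OF prob_space_axioms stationary_ergodic, of "\<lambda>p. \<bar>snd p\<bar> \<le> D"]
    by simp
qed

lemma abs_m_hat_diff_m_L_le:
  fixes N :: "nat \<Rightarrow> nat"
  assumes "cell_means_converge \<omega>" and "x \<in> support"
    and "\<And>j. 1 \<le> j \<Longrightarrow> \<bar>Y j \<omega>\<bar> \<le> D" and "0 \<le> D" and "0 \<le> L"
    and "filterlim N at_top sequentially"
  shows "\<bar>m_hat X Y A N L n x \<omega> - m_L M (X 1) (Y 1) A L x\<bar> \<le> 2 * D + L"
proof -
  have "\<bar>m_hat X Y A N L n x \<omega>\<bar> \<le> D + L / 2"
    using assms(3-5) by (rule abs_m_hat_le)
  moreover have "\<bar>m_L M (X 1) (Y 1) A L x\<bar> \<le> D + L / 2"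
    using assms by (rule abs_m_L_le)
  ultimately show ?thesis
    using abs_triangle_ineq4[of "m_hat X Y A N L n x \<omega>" "m_L M (X 1) (Y 1) A L x"] by simp
qed

lemma AE_m_hat_L2_tendsto_bounded_response:
  assumes D: "AE \<omega> in M. \<bar>Y 1 \<omega>\<bar> \<le> D" and "0 \<le> L" and N: "filterlim N at_top sequentially"
  shows "AE \<omega> in M. (\<lambda>n. \<integral>\<^sup>+ x. ennreal ((m_hat X Y A N L n x \<omega> - m_L M (X 1) (Y 1) A L x)\<^sup>2) \<partial>law)
    \<longlonglongrightarrow> 0"
proof -
  have "AE \<omega> in M. \<forall>j\<ge>1. \<bar>Y j \<omega>\<bar> \<le> max D 0"
    using D by (intro AE_abs_Y_le) auto
  with AE_cell_means_converge show ?thesis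
  proof eventually_elim
    case (elim \<omega>)
    show ?case
    proof (rule tendsto_nn_integral_square_diff_zero[OF prob_space_law _ AE_in_support])
      show "\<forall>\<^sub>F n in sequentially. \<forall>x\<in>support.
          \<bar>m_hat X Y A N L n x \<omega> - m_L M (X 1) (Y 1) A L x\<bar> \<le> 2 * max D 0 + L"
        using elim \<open>0 \<le> L\<close> N by (intro always_eventually allI ballI abs_m_hat_diff_m_L_le) auto
      show "uniform_limit (support \<inter> cball 0 R) (\<lambda>n x. m_hat X Y A N L n x \<omega>)
          (m_L M (X 1) (Y 1) A L) sequentially" for R
        using elim \<open>0 \<le> L\<close> N by (intro uniform_limit_m_hat) auto
    qed simp
  qed
qed

lemma AE_m_hat_L2_tendsto_bounded_support:
  assumes R: "AE x in law. norm x \<le> R" and "0 \<le> L" and N: "filterlim N at_top sequentially"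
  shows "AE \<omega> in M. (\<lambda>n. \<integral>\<^sup>+ x. ennreal ((m_hat X Y A N L n x \<omega> - m_L M (X 1) (Y 1) A L x)\<^sup>2) \<partial>law)
    \<longlonglongrightarrow> 0"
proof -
  have "bounded support"
    using prob_space.finite_measure[OF prob_space_law] R
    by (intro bounded_cell_support[OF partitions]) auto
  from AE_m_hat_uniform_limit[OF this \<open>0 \<le> L\<close> N] show ?thesis
  proof eventually_elim
    case (elim \<omega>)
    show ?case
    proof (rule tendsto_nn_integral_square_diff_zero[OF prob_space_law _ AE_in_support])
      show "\<forall>\<^sub>F n in sequentially. \<forall>x\<in>support.
          \<bar>m_hat X Y A N L n x \<omega> - m_L M (X 1) (Y 1) A L x\<bar> \<le> 1"
        using uniform_limitD[OF elim zero_less_one] by eventually_elim (auto simp: dist_real_def)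
      show "uniform_limit (support \<inter> cball 0 R) (\<lambda>n x. m_hat X Y A N L n x \<omega>)
          (m_L M (X 1) (Y 1) A L) sequentially" for R
        using elim by (rule uniform_limit_on_subset) auto
    qed simp
  qed
qed

end

theorem theorem1:
  fixes M :: "'o measure"
    and X :: "nat \<Rightarrow> 'o \<Rightarrow> 'x::euclidean_space"
    and Y :: "nat \<Rightarrow> 'o \<Rightarrow> real"
    and A :: "nat \<Rightarrow> 'x \<Rightarrow> 'x set"
    and N :: "nat \<Rightarrow> nat"
    and L :: real
  defines "\<mu> \<equiv> distr M borel (X 1)"
  defines "S \<equiv> cell_support \<mu> A"
  assumes "prob_space M"
    and "stationary_ergodic M (\<lambda>i \<omega>. (X i \<omega>, Y i \<omega>))"
    and "integrable M (Y 1)"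
    and "nested_cube_partitions A"
    and "L > 0"
    and "mono N" and "\<forall>n. N n \<ge> 1" and "filterlim N at_top sequentially"
  shows
    "(AE \<omega> in M. \<forall>x\<in>S. (\<lambda>n. m_hat X Y A N L n x \<omega>) \<longlonglongrightarrow> m_L M (X 1) (Y 1) A L x)
     \<and> (bounded S \<longrightarrow>
          (AE \<omega> in M. uniform_limit S (\<lambda>n x. m_hat X Y A N L n x \<omega>) (m_L M (X 1) (Y 1) A L) sequentially))
     \<and> (((\<exists>D. AE \<omega> in M. \<bar>Y 1 \<omega>\<bar> \<le> D) \<or> (\<exists>R. AE x in \<mu>. norm x \<le> R)) \<longrightarrow>
          (AE \<omega> in M. (\<lambda>n. \<integral>\<^sup>+ x. ennreal ((m_hat X Y A N L n x \<omega> - m_L M (X 1) (Y 1) A L x)\<^sup>2) \<partial>\<mu>)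
                        \<longlonglongrightarrow> 0))"
proof -
  interpret cell_regression M X Y A
    using assms(3-6) by (simp add: cell_regression_def cell_regression_axioms_def)
  have L: "0 \<le> L" using \<open>L > 0\<close> by simp
  note N = \<open>filterlim N at_top sequentially\<close>
  have "AE \<omega> in M. \<forall>x\<in>S. (\<lambda>n. m_hat X Y A N L n x \<omega>) \<longlonglongrightarrow> m_L M (X 1) (Y 1) A L x"
    using AE_cell_means_converge unfolding assms(1,2)
    by eventually_elim (use m_hat_tendsto L N in blast)
  moreover have "bounded S \<longrightarrow> (AE \<omega> in M.
      uniform_limit S (\<lambda>n x. m_hat X Y A N L n x \<omega>) (m_L M (X 1) (Y 1) A L) sequentially)"
    unfolding assms(1,2) using AE_m_hat_uniform_limit L N by blast
  moreover have "((\<exists>D. AE \<omega> in M. \<bar>Y 1 \<omega>\<bar> \<le> D) \<or> (\<exists>R. AE x in \<mu>. norm x \<le> R)) \<longrightarrow>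
      (AE \<omega> in M. (\<lambda>n. \<integral>\<^sup>+ x. ennreal ((m_hat X Y A N L n x \<omega> - m_L M (X 1) (Y 1) A L x)\<^sup>2) \<partial>\<mu>)
        \<longlonglongrightarrow> 0)"
    unfolding assms(1)
    using AE_m_hat_L2_tendsto_bounded_response AE_m_hat_L2_tendsto_bounded_support L N by blast
  ultimately show ?thesis by blast
qed

end
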